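(* For any $n\ge0$ and any even number $N>4$, almost surely $$1\le\mathbb E\Big(\frac{\phi(p_n)}{p_{n+1}}\,\Big|\,p_n\Big)\le1+\frac{\iota}{N},$$ for a finite constant $\iota$ depending only on $(A,B,C,D)$.
   Context: Model: nonzero reals $A,B,C,D$, $R:=B^2$, $S:=(C/D)^2$; $(V_n),(W_n)$ i.i.d. $N(0,1)$, $X_0\sim N(\widehat X_0^-,P_0)$ ($P_0>0$) independent, $X_{n+1}=AX_n+BW_{n+1}$, $Y_n=CX_n+DV_n$. $\phi(x):=\frac{(A^2+RS)x+R}{Sx+1}$. EnKF with $N+1$ particles: $\xi^i_0$ i.i.d. copies of $X_0$; independent i.i.d. $N(0,1)$ families $(V^i_n),(W^i_n)$ independent of the model; $m_n$ sample mean, $p_n:=\frac1N\sum_{i=1}^{N+1}(\xi^i_n-m_n)^2$, $g_n:=Cp_n/(C^2p_n+D^2)$, $\widehat\xi^i_n:=\xi^i_n+g_n(Y_n-C\xi^i_n-DV^i_n)$, $\xi^i_{n+1}:=A\widehat\xi^i_n+BW^i_{n+1}$. *)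

theory Defs
  imports "HOL-Probability.Probability"
begin

definition phi :: "real \<Rightarrow> real \<Rightarrow> real \<Rightarrow> real \<Rightarrow> real \<Rightarrow> real" where
  "phi A B C D x = (let R = B^2; S = (C/D)^2 in ((A^2 + R*S)*x + R) / (S*x + 1))"

definition smean :: "nat \<Rightarrow> (nat \<Rightarrow> real) \<Rightarrow> real" where
  "smean N x = (\<Sum>i=1..N+1. x i) / real (N+1)"

definition svar :: "nat \<Rightarrow> (nat \<Rightarrow> real) \<Rightarrow> real" where
  "svar N x = (\<Sum>i=1..N+1. (x i - smean N x)^2) / real N"

text \<open>EnKF particles (pathwise). Arguments: A B C D N, initial particles xi0 i,
  observations Y n, particle observation noises Vp n i, particle signal noises Wp n i.
  Result: enkf ... n i = xi^i_n.\<close>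
primrec enkf :: "real \<Rightarrow> real \<Rightarrow> real \<Rightarrow> real \<Rightarrow> nat \<Rightarrow> (nat \<Rightarrow> real) \<Rightarrow> (nat \<Rightarrow> real)
    \<Rightarrow> (nat \<Rightarrow> nat \<Rightarrow> real) \<Rightarrow> (nat \<Rightarrow> nat \<Rightarrow> real) \<Rightarrow> nat \<Rightarrow> nat \<Rightarrow> real" where
  "enkf A B C D N xi0 Y Vp Wp 0 = xi0"
| "enkf A B C D N xi0 Y Vp Wp (Suc n) =
     (\<lambda>i. let x = enkf A B C D N xi0 Y Vp Wp n;
              p = svar N x;
              g = C * p / (C^2 * p + D^2);
              xhat = x i + g * (Y n - C * x i - D * Vp n i)
          in A * xhat + B * Wp (Suc n) i)"

definition enkf_p :: "real \<Rightarrow> real \<Rightarrow> real \<Rightarrow> real \<Rightarrow> nat \<Rightarrow> (nat \<Rightarrow> real) \<Rightarrow> (nat \<Rightarrow> real)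
    \<Rightarrow> (nat \<Rightarrow> nat \<Rightarrow> real) \<Rightarrow> (nat \<Rightarrow> nat \<Rightarrow> real) \<Rightarrow> nat \<Rightarrow> real" where
  "enkf_p A B C D N xi0 Y Vp Wp n = svar N (enkf A B C D N xi0 Y Vp Wp n)"

datatype rvidx = IX0 | IV nat | IW nat | IXi nat | IVp nat nat | IWp nat nat

definition rvfam :: "('a \<Rightarrow> real) \<Rightarrow> (nat \<Rightarrow> 'a \<Rightarrow> real) \<Rightarrow> (nat \<Rightarrow> 'a \<Rightarrow> real)
    \<Rightarrow> (nat \<Rightarrow> 'a \<Rightarrow> real) \<Rightarrow> (nat \<Rightarrow> nat \<Rightarrow> 'a \<Rightarrow> real) \<Rightarrow> (nat \<Rightarrow> nat \<Rightarrow> 'a \<Rightarrow> real)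
    \<Rightarrow> rvidx \<Rightarrow> 'a \<Rightarrow> real" where
  "rvfam X0 V W xi0 Vp Wp k = (case k of IX0 \<Rightarrow> X0 | IV n \<Rightarrow> V n | IW n \<Rightarrow> W n
      | IXi i \<Rightarrow> xi0 i | IVp n i \<Rightarrow> Vp n i | IWp n i \<Rightarrow> Wp n i)"

definition rvidx_set :: "nat \<Rightarrow> rvidx set" where
  "rvidx_set N = {IX0} \<union> range IV \<union> range IW \<union> IXi ` {1..N+1}
      \<union> {IVp n i | n i. i \<in> {1..N+1}} \<union> {IWp n i | n i. i \<in> {1..N+1}}"

end

theory Submission
  imports Defs
begin

(* Given the particles at time n, the particles at time n + 1 are a deterministic vector \<mu>
  plus i.i.d. centred Gaussian noise of variance \<sigma>\<^sup>2, and phi p\<^sub>n = svar \<mu> + \<sigma>\<^sup>2. Thus T = N p\<^sub>n\<^sub>+\<^sub>1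
  is \<sigma>\<^sup>2 times a noncentral chi-square variable with N degrees of freedom, whose Laplace transform
  E exp (-t T) = exp (-t Q / (1 + 2\<sigma>\<^sup>2t)) / (1 + 2\<sigma>\<^sup>2t)\<^bsup>N/2\<^esup>, Q = N svar \<mu>, is obtained by writing
  exp (-t T) as a Gaussian integral over the centre c of \<Prod>\<^sub>i exp (-t (y\<^sub>i - c)\<^sup>2), which factorises
  over the independent particles. Integrating 1/T = \<integral>\<^sub>0\<^sup>\<infinity> exp (-t T) dt and bounding the Laplace
  transform from above and below by explicitly integrable functions gives
  1 \<le> phi p\<^sub>n E (1 / p\<^sub>n\<^sub>+\<^sub>1 | particles at time n) \<le> 1 + 12 / N for even N \<ge> 6, so \<iota> = 12. *)

section \<open>Gaussian integrals\<close>

lemma nn_integral_normal_density: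
  assumes "0 < \<sigma>"
  shows "(\<integral>\<^sup>+x. ennreal (normal_density \<mu> \<sigma> x) \<partial>lborel) = 1"
proof -
  interpret prob_space "density lborel (\<lambda>x. ennreal (normal_density \<mu> \<sigma> x))"
    using assms by (rule prob_space_normal_density)
  show ?thesis
    using emeasure_space_1 by (simp add: emeasure_density)
qed

lemma nn_integral_exp_neg_square:
  fixes a b :: real
  assumes a: "0 < a"
  shows "(\<integral>\<^sup>+c. ennreal (exp (- (a * (c - b)^2))) \<partial>lborel) = ennreal (sqrt (pi / a))"
proof -
  define \<sigma> where "\<sigma> = sqrt (1 / (2 * a))"
  have \<sigma>: "0 < \<sigma>" and \<sigma>2: "\<sigma>^2 = 1 / (2 * a)"
    unfolding \<sigma>_def using a by simp_all
  have "exp (- (a * (c - b)^2)) = sqrt (pi / a) * normal_density b \<sigma> c" for c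
    unfolding normal_density_def using a by (simp add: \<sigma>2 real_sqrt_divide)
  then have "(\<integral>\<^sup>+c. ennreal (exp (- (a * (c - b)^2))) \<partial>lborel)
      = (\<integral>\<^sup>+c. ennreal (sqrt (pi / a)) * ennreal (normal_density b \<sigma> c) \<partial>lborel)"
    using a by (simp add: ennreal_mult)
  also have "\<dots> = ennreal (sqrt (pi / a))"
    by (simp add: nn_integral_cmult nn_integral_normal_density[OF \<sigma>])
  finally show ?thesis .
qed

lemma normal_density_mult_exp_neg_square:
  fixes \<sigma> t z x :: real
  assumes \<sigma>: "0 < \<sigma>" and t: "0 \<le> t"
  defines "u \<equiv> 1 + 2 * t * \<sigma>^2"
  shows "normal_density 0 \<sigma> x * exp (- (t * (z + x)^2))
     = exp (- (t * z^2 / u)) / sqrt u * normal_density (- 2 * t * \<sigma>^2 * z / u) (\<sigma> / sqrt u) x"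
proof -
  have u: "0 < u" unfolding u_def using \<sigma> t by (simp add: add_pos_nonneg)
  have \<sigma>u: "(\<sigma> / sqrt u)^2 = \<sigma>^2 / u" using u by (simp add: power_divide)
  have exponent: "- ((x - 0)^2) / (2 * \<sigma>^2) + - (t * (z + x)^2)
      = - (t * z^2 / u) + - ((x - (- 2 * t * \<sigma>^2 * z / u))^2) / (2 * (\<sigma> / sqrt u)^2)"
    unfolding \<sigma>u using u \<sigma> by (simp add: field_simps) (simp add: u_def; algebra)
  have factor: "1 / sqrt (2 * pi * \<sigma>^2) = 1 / sqrt u * (1 / sqrt (2 * pi * (\<sigma> / sqrt u)^2))"
    using u \<sigma> by (simp add: power_divide real_sqrt_divide real_sqrt_mult)
  have "normal_density 0 \<sigma> x * exp (- (t * (z + x)^2))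
      = 1 / sqrt (2 * pi * \<sigma>^2) * exp (- ((x - 0)^2) / (2 * \<sigma>^2) + - (t * (z + x)^2))"
    unfolding normal_density_def by (simp add: mult_exp_exp)
  also have "\<dots> = exp (- (t * z^2 / u)) / sqrt u * normal_density (- 2 * t * \<sigma>^2 * z / u) (\<sigma> / sqrt u) x"
    unfolding exponent factor normal_density_def exp_add by (simp add: field_simps)
  finally show ?thesis .
qed

lemma (in prob_space) nn_integral_exp_neg_square_normal:
  assumes Z: "distributed M lborel Z (\<lambda>x. ennreal (normal_density 0 \<sigma> x))"
    and \<sigma>: "0 < \<sigma>" and t: "0 \<le> t"
  defines "u \<equiv> 1 + 2 * t * \<sigma>^2"
  shows "(\<integral>\<^sup>+\<omega>. ennreal (exp (- (t * (z + Z \<omega>)^2))) \<partial>M) = ennreal (exp (- (t * z^2 / u)) / sqrt u)"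
proof -
  define K where "K = exp (- (t * z^2 / u)) / sqrt u"
  have u: "0 < u" unfolding u_def using \<sigma> t by (simp add: add_pos_nonneg)
  then have K: "0 \<le> K" unfolding K_def by simp
  have \<sigma>': "0 < \<sigma> / sqrt u" using \<sigma> u by simp
  have "(\<integral>\<^sup>+\<omega>. ennreal (exp (- (t * (z + Z \<omega>)^2))) \<partial>M)
      = (\<integral>\<^sup>+x. ennreal (normal_density 0 \<sigma> x) * ennreal (exp (- (t * (z + x)^2))) \<partial>lborel)"
    by (rule distributed_nn_integral[OF Z, symmetric]) simp
  also have "\<dots> = (\<integral>\<^sup>+x. ennreal K * ennreal (normal_density (- 2 * t * \<sigma>^2 * z / u) (\<sigma> / sqrt u) x) \<partial>lborel)"
  proof (rule nn_integral_cong)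
    fix x
    have "normal_density 0 \<sigma> x * exp (- (t * (z + x)^2))
        = K * normal_density (- 2 * t * \<sigma>^2 * z / u) (\<sigma> / sqrt u) x"
      using normal_density_mult_exp_neg_square[OF \<sigma> t, where z = z and x = x] unfolding K_def u_def by simp
    then show "ennreal (normal_density 0 \<sigma> x) * ennreal (exp (- (t * (z + x)^2)))
        = ennreal K * ennreal (normal_density (- 2 * t * \<sigma>^2 * z / u) (\<sigma> / sqrt u) x)"
      using K by (simp flip: ennreal_mult)
  qed
  also have "\<dots> = ennreal K"
    by (simp add: nn_integral_cmult nn_integral_normal_density[OF \<sigma>'])
  finally show ?thesis unfolding K_def .
qed

section \<open>Sample mean and sample variance\<close>

declare sum.cl_ivl_Suc[simp del] prod.cl_ivl_Suc[simp del]

lemma borel_measurable_svar[measurable (raw)]: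
  assumes "\<And>i. i \<in> {1..N+1} \<Longrightarrow> f i \<in> borel_measurable M"
  shows "(\<lambda>x. svar N (\<lambda>i. f i x)) \<in> borel_measurable M"
  unfolding svar_def smean_def using assms by measurable

lemma svar_cong:
  assumes "\<And>i. i \<in> {1..N+1} \<Longrightarrow> x i = y i"
  shows "svar N x = svar N y"
proof -
  have "sum x {1..N+1} = sum y {1..N+1}"
    by (rule sum.cong) (simp_all add: assms)
  then have "smean N x = smean N y"
    unfolding smean_def by simp
  then show ?thesis
    unfolding svar_def by (metis (no_types, lifting) assms sum.cong)
qed

lemma smean_shift: "smean N (\<lambda>i. x i + c) = smean N x + c"
  unfolding smean_def by (simp add: sum.distrib field_simps)

lemma svar_shift: "svar N (\<lambda>i. x i + c) = svar N x"
  unfolding svar_def by (simp add: smean_shift)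

lemma smean_scale: "smean N (\<lambda>i. a * x i) = a * smean N x"
  unfolding smean_def by (simp add: sum_distrib_left[symmetric])

lemma svar_scale: "svar N (\<lambda>i. a * x i) = a^2 * svar N x"
proof -
  have "(\<Sum>i=1..N+1. (a * x i - a * smean N x)^2) = a^2 * (\<Sum>i=1..N+1. (x i - smean N x)^2)"
    by (simp add: sum_distrib_left power_mult_distrib right_diff_distrib[symmetric])
  then show ?thesis unfolding svar_def smean_scale by simp
qed

lemma svar_nonneg: "0 \<le> svar N x"
  unfolding svar_def by (simp add: sum_nonneg)

lemma sum_square_dev_eq_svar:
  "(\<Sum>i=1..N+1. (x i - c)^2) = real N * svar N x + real (N + 1) * (c - smean N x)^2"
proof -
  let ?m = "smean N x"
  have centred: "(\<Sum>i=1..N+1. x i - ?m) = 0"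
    unfolding smean_def by (simp add: sum_subtractf)
  have N_svar: "real N * svar N x = (\<Sum>i=1..N+1. (x i - ?m)^2)"
    by (cases "N = 0") (simp_all add: svar_def smean_def sum.cl_ivl_Suc)
  have "(\<Sum>i=1..N+1. (x i - c)^2) = (\<Sum>i=1..N+1. (x i - ?m)^2 + 2 * (?m - c) * (x i - ?m) + (c - ?m)^2)"
    by (rule sum.cong) (auto simp: power2_eq_square algebra_simps)
  also have "\<dots> = (\<Sum>i=1..N+1. (x i - ?m)^2) + 2 * (?m - c) * (\<Sum>i=1..N+1. x i - ?m)
      + real (N + 1) * (c - ?m)^2"
    by (simp add: sum.distrib sum_distrib_left)
  also have "\<dots> = real N * svar N x + real (N + 1) * (c - ?m)^2"
    unfolding centred N_svar by simp
  finally show ?thesis .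
qed

lemma nn_integral_exp_neg_sum_square_dev:
  fixes t :: real
  assumes t: "0 < t"
  shows "(\<integral>\<^sup>+c. ennreal (exp (- (t * (\<Sum>i=1..N+1. (x i - c)^2)))) \<partial>lborel)
    = ennreal (exp (- (t * (real N * svar N x))) * sqrt (pi / (t * real (N + 1))))"
proof -
  let ?a = "t * real (N + 1)"
  have "exp (- (t * (\<Sum>i=1..N+1. (x i - c)^2)))
      = exp (- (t * (real N * svar N x))) * exp (- (?a * (c - smean N x)^2))" for c
    unfolding sum_square_dev_eq_svar by (simp add: algebra_simps flip: exp_add)
  then show ?thesis
    using t by (simp add: ennreal_mult nn_integral_cmult nn_integral_exp_neg_square)
qed

section \<open>Inverse moments of the sample variance of a Gaussian sample\<close>

lemma (in prob_space) nn_integral_exp_neg_svar_normal: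
  fixes N :: nat and e :: "nat \<Rightarrow> 'a \<Rightarrow> real" and \<mu> :: "nat \<Rightarrow> real"
  assumes \<sigma>: "0 < \<sigma>" and N: "even N" and t: "0 < t"
    and indep: "indep_vars (\<lambda>_. borel) e {1..N+1}"
    and distr: "\<And>i. i \<in> {1..N+1} \<Longrightarrow> distributed M lborel (e i) (\<lambda>x. ennreal (normal_density 0 \<sigma> x))"
  defines "u \<equiv> 1 + 2 * t * \<sigma>^2"
  shows "(\<integral>\<^sup>+\<omega>. ennreal (exp (- (t * (real N * svar N (\<lambda>i. \<mu> i + e i \<omega>))))) \<partial>M)
       = ennreal (exp (- (t * (real N * svar N \<mu>) / u)) / u ^ (N div 2))"
proof -
  let ?S = "{1..N+1}"
  define n1 where "n1 = real (N + 1)"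
  have u: "0 < u" unfolding u_def using t by (simp add: add_pos_nonneg)
  have n1: "0 < n1" unfolding n1_def by simp
  have [measurable]: "\<And>i. i \<in> ?S \<Longrightarrow> e i \<in> borel_measurable M"
    using distributed_measurable[OF distr] by simp
  define F where "F c \<omega> = ennreal (exp (- (t * (\<Sum>i\<in>?S. (\<mu> i + e i \<omega> - c)^2))))" for c \<omega>
  have [measurable]: "case_prod F \<in> borel_measurable (lborel \<Otimes>\<^sub>M M)"
    unfolding F_def case_prod_beta' by measurable
  interpret pair_sigma_finite lborel M
    by (intro pair_sigma_finite.intro sigma_finite_lborel prob_space_imp_sigma_finite prob_space_axioms)
  have linearise: "ennreal (exp (- (t * (real N * svar N (\<lambda>i. \<mu> i + e i \<omega>)))))
      = ennreal (sqrt (t * n1 / pi)) * (\<integral>\<^sup>+c. F c \<omega> \<partial>lborel)" for \<omega>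
  proof -
    have "sqrt (t * n1 / pi) * sqrt (pi / (t * n1)) = 1"
      using t n1 by (simp flip: real_sqrt_mult)
    then show ?thesis
      unfolding F_def nn_integral_exp_neg_sum_square_dev[OF t] n1_def
      using t by (simp add: ennreal_mult[symmetric] mult.left_commute)
  qed
  have E_F: "(\<integral>\<^sup>+\<omega>. F c \<omega> \<partial>M)
      = ennreal ((1 / sqrt u) ^ (N + 1)) * ennreal (exp (- (t / u * (\<Sum>i\<in>?S. (\<mu> i - c)^2))))" for c
  proof -
    have "indep_vars (\<lambda>_. borel) (\<lambda>i \<omega>. ennreal (exp (- (t * (\<mu> i - c + e i \<omega>)^2)))) ?S"
      by (rule indep_vars_compose2[OF indep]) simp
    moreover have "F c \<omega> = (\<Prod>i\<in>?S. ennreal (exp (- (t * (\<mu> i - c + e i \<omega>)^2))))" for \<omega>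
      unfolding F_def sum_distrib_left
      by (simp add: prod_ennreal exp_sum algebra_simps flip: sum_negf)
    ultimately have "(\<integral>\<^sup>+\<omega>. F c \<omega> \<partial>M) = (\<Prod>i\<in>?S. \<integral>\<^sup>+\<omega>. ennreal (exp (- (t * (\<mu> i - c + e i \<omega>)^2))) \<partial>M)"
      by (simp add: indep_vars_nn_integral)
    also have "\<dots> = (\<Prod>i\<in>?S. ennreal (exp (- (t * (\<mu> i - c)^2 / u)) / sqrt u))"
      using nn_integral_exp_neg_square_normal[OF distr \<sigma> less_imp_le[OF t]]
      by (intro prod.cong) (simp_all add: u_def)
    also have "\<dots> = ennreal ((1 / sqrt u) ^ (N + 1) * exp (- (t / u * (\<Sum>i\<in>?S. (\<mu> i - c)^2))))"
      using u by (simp add: prod_ennreal exp_sum prod.distrib prod_dividef power_one_over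
          sum_distrib_left sum_negf[symmetric] divide_inverse mult_ac)
    also have "\<dots> = ennreal ((1 / sqrt u) ^ (N + 1)) * ennreal (exp (- (t / u * (\<Sum>i\<in>?S. (\<mu> i - c)^2))))"
      using u by (intro ennreal_mult) simp_all
    finally show ?thesis .
  qed
  have "(\<integral>\<^sup>+\<omega>. ennreal (exp (- (t * (real N * svar N (\<lambda>i. \<mu> i + e i \<omega>))))) \<partial>M)
      = ennreal (sqrt (t * n1 / pi)) * (\<integral>\<^sup>+c. (\<integral>\<^sup>+\<omega>. F c \<omega> \<partial>M) \<partial>lborel)"
    by (simp add: linearise nn_integral_cmult Fubini')
  also have "\<dots> = ennreal (sqrt (t * n1 / pi) * ((1 / sqrt u) ^ (N + 1)
      * (exp (- (t / u * (real N * svar N \<mu>))) * sqrt (pi / (t / u * n1)))))"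
  proof -
    have "(\<integral>\<^sup>+c. (\<integral>\<^sup>+\<omega>. F c \<omega> \<partial>M) \<partial>lborel)
        = ennreal ((1 / sqrt u) ^ (N + 1)) * (\<integral>\<^sup>+c. ennreal (exp (- (t / u * (\<Sum>i\<in>?S. (\<mu> i - c)^2)))) \<partial>lborel)"
      unfolding E_F by (rule nn_integral_cmult) simp
    also have "(\<integral>\<^sup>+c. ennreal (exp (- (t / u * (\<Sum>i\<in>?S. (\<mu> i - c)^2)))) \<partial>lborel)
        = ennreal (exp (- (t / u * (real N * svar N \<mu>))) * sqrt (pi / (t / u * n1)))"
      unfolding n1_def by (rule nn_integral_exp_neg_sum_square_dev) (use t u in simp)
    finally show ?thesis
      using t u n1 by (simp add: ennreal_mult[symmetric] mult.assoc del: of_nat_Suc)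
  qed
  also have "sqrt (t * n1 / pi) * ((1 / sqrt u) ^ (N + 1)
      * (exp (- (t / u * (real N * svar N \<mu>))) * sqrt (pi / (t / u * n1))))
      = exp (- (t * (real N * svar N \<mu>) / u)) / u ^ (N div 2)"
  proof -
    have "sqrt (t * n1 / pi) * sqrt (pi / (t / u * n1)) = sqrt u"
      using t n1 u by (simp flip: real_sqrt_mult)
    moreover have "sqrt u * (1 / sqrt u) ^ (N + 1) = 1 / u ^ (N div 2)"
      using N u by (simp add: power_one_over)
        (metis dvd_mult_div_cancel power_mult real_sqrt_pow2 less_imp_le)
    ultimately have "sqrt (t * n1 / pi) * sqrt (pi / (t / u * n1)) * (1 / sqrt u) ^ (N + 1)
        = 1 / u ^ (N div 2)"
      by simp
    moreover have "sqrt (t * n1 / pi) * ((1 / sqrt u) ^ (N + 1)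
        * (exp (- (t / u * (real N * svar N \<mu>))) * sqrt (pi / (t / u * n1))))
      = exp (- (t / u * (real N * svar N \<mu>)))
        * (sqrt (t * n1 / pi) * sqrt (pi / (t / u * n1)) * (1 / sqrt u) ^ (N + 1))"
      by (simp only: mult_ac times_divide_eq_left)
    ultimately show ?thesis
      by simp
  qed
  finally show ?thesis .
qed

lemma emeasure_lborel_atLeast: "emeasure lborel {a::real..} = \<infinity>"
proof (rule ccontr)
  assume "emeasure lborel {a..} \<noteq> \<infinity>"
  then obtain r where r: "emeasure lborel {a..} = ennreal r" "0 \<le> r"
    by (metis ennreal_cases infinity_ennreal_def)
  have "emeasure lborel {a..a + r + 1} \<le> emeasure lborel {a..}"
    by (rule emeasure_mono) auto
  then show False
    using r by (simp add: ennreal_le_iff)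
qed

lemma nn_integral_exp_neg_mult_atLeast_0:
  fixes T :: real
  assumes T: "0 \<le> T"
  shows "(\<integral>\<^sup>+t. ennreal (exp (- (t * T))) * indicator {0..} t \<partial>lborel)
    = (if T = 0 then \<infinity> else ennreal (1 / T))"
proof (cases "T = 0")
  case True
  then show ?thesis by (simp add: emeasure_lborel_atLeast)
next
  case False
  with T have T: "0 < T" by simp
  have "filterlim (\<lambda>t. - (t * T)) at_bot at_top"
    using filterlim_tendsto_pos_mult_at_top[OF tendsto_const T filterlim_ident]
    by (simp add: filterlim_uminus_at_bot mult.commute)
  then have "((\<lambda>t. - exp (- (t * T)) / T) \<longlongrightarrow> - 0 / T) at_top"
    by (intro tendsto_intros filterlim_compose[OF exp_at_bot]) (use T in auto)
  moreover have "DERIV (\<lambda>t. - exp (- (t * T)) / T) t :> exp (- (t * T))" for t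
    using T by (auto intro!: derivative_eq_intros)
  ultimately have "(\<integral>\<^sup>+t. ennreal (exp (- (t * T))) * indicator {0..} t \<partial>lborel)
      = ennreal (- 0 / T - (- exp (- (0 * T)) / T))"
    by (intro nn_integral_FTC_atLeast) auto
  then show ?thesis using T by simp
qed

lemma (in prob_space) nn_integral_inverse_eq_Laplace:
  assumes [measurable]: "T \<in> borel_measurable M" and T: "\<And>\<omega>. \<omega> \<in> space M \<Longrightarrow> 0 \<le> T \<omega>"
    and finite: "(\<integral>\<^sup>+t. (\<integral>\<^sup>+\<omega>. ennreal (exp (- (t * T \<omega>))) \<partial>M) * indicator {0..} t \<partial>lborel) \<noteq> \<infinity>"
  shows "(\<integral>\<^sup>+\<omega>. ennreal (1 / T \<omega>) \<partial>M)
    = (\<integral>\<^sup>+t. (\<integral>\<^sup>+\<omega>. ennreal (exp (- (t * T \<omega>))) \<partial>M) * indicator {0..} t \<partial>lborel)"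
proof -
  define L where "L \<omega> = (\<integral>\<^sup>+t. ennreal (exp (- (t * T \<omega>))) * indicator {0..} t \<partial>lborel)" for \<omega>
  interpret pair_sigma_finite lborel M
    by (intro pair_sigma_finite.intro sigma_finite_lborel prob_space_imp_sigma_finite prob_space_axioms)
  have "(\<integral>\<^sup>+\<omega>. L \<omega> \<partial>M)
      = (\<integral>\<^sup>+t. (\<integral>\<^sup>+\<omega>. ennreal (exp (- (t * T \<omega>))) \<partial>M) * indicator {0..} t \<partial>lborel)"
    unfolding L_def by (subst Fubini') (simp_all add: nn_integral_multc)
  moreover have "AE \<omega> in M. ennreal (1 / T \<omega>) = L \<omega>"
  proof -
    have "AE \<omega> in M. L \<omega> \<noteq> \<infinity>"
      using finite \<open>(\<integral>\<^sup>+\<omega>. L \<omega> \<partial>M) = _\<close> by (intro nn_integral_PInf_AE) (simp_all add: L_def)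
    then show ?thesis
      using AE_space by eventually_elim (auto simp: L_def T nn_integral_exp_neg_mult_atLeast_0 split: if_splits)
  qed
  ultimately show ?thesis
    by (simp add: nn_integral_cong_AE)
qed

lemma ln_ge_one_minus_inverse:
  fixes u :: real
  assumes "1 \<le> u"
  shows "(u - 1) / u \<le> ln u"
proof -
  have "ln (1 / u) \<le> 1 / u - 1"
    using assms by (intro ln_le_minus_one) simp
  then show ?thesis
    using assms by (simp add: ln_div field_simps)
qed

(* With v = 2\<sigma>\<^sup>2 this is the Laplace transform of \<sigma>\<^sup>2 times a noncentral chi-square
  variable with 2K degrees of freedom and noncentrality Q/\<sigma>\<^sup>2. *)
definition ncchisq_laplace :: "real \<Rightarrow> real \<Rightarrow> nat \<Rightarrow> real \<Rightarrow> real" where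
  "ncchisq_laplace v Q K t = exp (- (t * Q / (1 + v * t))) / (1 + v * t) ^ K"

lemma ncchisq_laplace_le:
  fixes v t Q :: real and K :: nat
  assumes v: "0 < v" and t: "0 \<le> t" and Q: "0 \<le> Q" and K: "2 \<le> K"
  shows "ncchisq_laplace v Q K t \<le> exp (- ((real K - 2 + Q / v) * (v * t / (1 + v * t)))) / (1 + v * t)^2"
proof -
  define u where "u = 1 + v * t"
  have u1: "1 \<le> u" unfolding u_def using v t by simp
  have vt: "v * t / u \<le> ln u"
    using ln_ge_one_minus_inverse[OF u1] unfolding u_def by simp
  have "exp (real (K - 2) * (v * t / u)) \<le> exp (real (K - 2) * ln u)"
    using vt by (intro exp_le_cancel_iff[THEN iffD2] mult_left_mono) auto
  also have "\<dots> = u ^ (K - 2)"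
    using u1 by (simp add: exp_of_nat_mult)
  finally have uK2: "exp (real (K - 2) * (v * t / u)) \<le> u ^ (K - 2)" .
  have "u ^ K = u^2 * u ^ (K - 2)"
    using K by (metis le_add_diff_inverse power_add)
  then have "ncchisq_laplace v Q K t = exp (- (t * Q / u)) / u ^ (K - 2) / u^2"
    unfolding ncchisq_laplace_def u_def[symmetric] by (simp add: mult.commute)
  also have "\<dots> \<le> exp (- (t * Q / u)) / exp (real (K - 2) * (v * t / u)) / u^2"
    using uK2 u1 by (intro divide_right_mono divide_left_mono) auto
  also have "exp (- (t * Q / u)) / exp (real (K - 2) * (v * t / u))
      = exp (- ((real K - 2 + Q / v) * (v * t / u)))"
    using v u1 K by (simp add: exp_diff[symmetric] of_nat_diff field_simps)
  finally show ?thesis unfolding u_def .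
qed

lemma ncchisq_laplace_ge:
  fixes v t Q :: real and K :: nat
  assumes v: "0 < v" and t: "0 \<le> t" and Q: "0 \<le> Q"
  shows "(1 + v * t) powr (- (real K + Q / v)) \<le> ncchisq_laplace v Q K t"
proof -
  define u where "u = 1 + v * t"
  have u1: "1 \<le> u" unfolding u_def using v t by simp
  have "t * Q / u = Q / v * (v * t / u)"
    using v by simp
  also have "\<dots> \<le> Q / v * ln u"
    using ln_ge_one_minus_inverse[OF u1] Q v unfolding u_def by (intro mult_left_mono) simp_all
  finally have "exp (- (Q / v * ln u)) \<le> exp (- (t * Q / u))"
    by simp
  then have "exp (- (Q / v * ln u)) / u ^ K \<le> exp (- (t * Q / u)) / u ^ K"
    using u1 by (intro divide_right_mono) simp_all
  moreover have "u powr (- (real K + Q / v)) = exp (- (Q / v * ln u) - real K * ln u)"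
    using u1 by (simp add: powr_def algebra_simps)
  moreover have "exp (- (Q / v * ln u) - real K * ln u) = exp (- (Q / v * ln u)) / u ^ K"
    using u1 by (simp add: exp_diff exp_of_nat_mult)
  ultimately show ?thesis
    unfolding ncchisq_laplace_def u_def by simp
qed

lemma filterlim_affine_at_top:
  fixes v :: real
  assumes "0 < v"
  shows "filterlim (\<lambda>t. 1 + v * t) at_top at_top"
  by (rule filterlim_tendsto_add_at_top[OF tendsto_const])
     (rule filterlim_tendsto_pos_mult_at_top[OF tendsto_const assms filterlim_ident])

lemma nn_integral_exp_frac_div_square:
  fixes v c :: real
  assumes v: "0 < v" and c: "0 < c"
  shows "(\<integral>\<^sup>+t. ennreal (exp (- (c * (v * t / (1 + v * t)))) / (1 + v * t)^2) * indicator {0..} t \<partial>lborel)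
     = ennreal ((1 - exp (- c)) / (v * c))"
proof -
  have "((\<lambda>t. 1 - inverse (1 + v * t)) \<longlongrightarrow> 1 - 0) at_top"
    by (intro tendsto_intros tendsto_inverse_0_at_top filterlim_affine_at_top v)
  moreover have "\<forall>\<^sub>F t in at_top. 1 - inverse (1 + v * t) = v * t / (1 + v * t)"
    using eventually_ge_at_top[of 0]
  proof eventually_elim
    case (elim t)
    then have "0 < 1 + v * t" using v by (simp add: add_pos_nonneg)
    then show ?case by (simp add: field_simps)
  qed
  ultimately have "((\<lambda>t. v * t / (1 + v * t)) \<longlongrightarrow> 1) at_top"
    by (simp add: tendsto_cong)
  then have lim: "((\<lambda>t. - exp (- (c * (v * t / (1 + v * t)))) / (v * c)) \<longlongrightarrow> - exp (- (c * 1)) / (v * c)) at_top"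
    using v c by (intro tendsto_intros) simp_all
  have "DERIV (\<lambda>t. - exp (- (c * (v * t / (1 + v * t)))) / (v * c)) t
      :> exp (- (c * (v * t / (1 + v * t)))) / (1 + v * t)^2" if t: "0 \<le> t" for t
  proof -
    have "0 < 1 + v * t" using v t by (simp add: add_pos_nonneg)
    then have "DERIV (\<lambda>t. v * t / (1 + v * t)) t :> v / (1 + v * t)^2"
      by (auto intro!: derivative_eq_intros simp: field_simps power2_eq_square)
    moreover have "DERIV (\<lambda>y. - exp (- (c * y)) / (v * c)) (v * t / (1 + v * t))
        :> exp (- (c * (v * t / (1 + v * t)))) / v"
      using v c by (auto intro!: derivative_eq_intros simp: field_simps)
    ultimately show ?thesis
      using DERIV_chain2 v by fastforce
  qed
  then have "(\<integral>\<^sup>+t. ennreal (exp (- (c * (v * t / (1 + v * t)))) / (1 + v * t)^2) * indicator {0..} t \<partial>lborel)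
     = ennreal (- exp (- (c * 1)) / (v * c) - (- exp (- (c * (v * 0 / (1 + v * 0)))) / (v * c)))"
    by (intro nn_integral_FTC_atLeast[OF _ _ _ lim]) auto
  then show ?thesis
    by (simp add: diff_divide_distrib)
qed

lemma nn_integral_affine_powr_neg:
  fixes v r :: real
  assumes v: "0 < v" and r: "1 < r"
  shows "(\<integral>\<^sup>+t. ennreal ((1 + v * t) powr (- r)) * indicator {0..} t \<partial>lborel) = ennreal (1 / (v * (r - 1)))"
proof -
  have lim: "((\<lambda>t. - ((1 + v * t) powr (1 - r)) / (v * (r - 1))) \<longlongrightarrow> - 0 / (v * (r - 1))) at_top"
    by (intro tendsto_intros tendsto_neg_powr filterlim_affine_at_top v) (use v r in simp_all)
  have "DERIV (\<lambda>t. - ((1 + v * t) powr (1 - r)) / (v * (r - 1))) t :> (1 + v * t) powr (- r)"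
    if t: "0 \<le> t" for t
  proof -
    have p: "0 < 1 + v * t" using v t by (simp add: add_pos_nonneg)
    have "DERIV (\<lambda>t. - ((1 + v * t) powr (1 - r)) / (v * (r - 1))) t
        :> - ((1 - r) * (1 + v * t) powr (1 - r - 1) * v) / (v * (r - 1))"
      using p v r by (auto intro!: derivative_eq_intros)
    moreover have "- ((1 - r) * (1 + v * t) powr (1 - r - 1) * v) / (v * (r - 1)) = (1 + v * t) powr (- r)"
      using v r by (simp add: field_simps)
    ultimately show ?thesis by simp
  qed
  then have "(\<integral>\<^sup>+t. ennreal ((1 + v * t) powr (- r)) * indicator {0..} t \<partial>lborel)
     = ennreal (- 0 / (v * (r - 1)) - (- ((1 + v * 0) powr (1 - r)) / (v * (r - 1))))"
    by (intro nn_integral_FTC_atLeast[OF _ _ _ lim]) auto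
  then show ?thesis by simp
qed

lemma nn_integral_ncchisq_laplace_le:
  fixes v Q :: real and K :: nat
  assumes v: "0 < v" and Q: "0 \<le> Q" and K: "3 \<le> K"
  shows "(\<integral>\<^sup>+t. ennreal (ncchisq_laplace v Q K t) * indicator {0..} t \<partial>lborel)
    \<le> ennreal (1 / (v * (real K - 2) + Q))"
proof -
  define c where "c = real K - 2 + Q / v"
  have c: "0 < c" unfolding c_def using K Q v by (simp add: add_pos_nonneg)
  have "(\<integral>\<^sup>+t. ennreal (ncchisq_laplace v Q K t) * indicator {0..} t \<partial>lborel)
      \<le> (\<integral>\<^sup>+t. ennreal (exp (- (c * (v * t / (1 + v * t)))) / (1 + v * t)^2) * indicator {0..} t \<partial>lborel)"
    using ncchisq_laplace_le[OF v _ Q] K unfolding c_def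
    by (intro nn_integral_mono) (simp add: ennreal_leI split: split_indicator)
  also have "\<dots> = ennreal ((1 - exp (- c)) / (v * c))"
    by (rule nn_integral_exp_frac_div_square[OF v c])
  also have "\<dots> \<le> ennreal (1 / (v * c))"
    using v c by (intro ennreal_leI divide_right_mono) auto
  also have "v * c = v * (real K - 2) + Q"
    unfolding c_def using v by (simp add: field_simps)
  finally show ?thesis .
qed

lemma nn_integral_ncchisq_laplace_ge:
  fixes v Q :: real and K :: nat
  assumes v: "0 < v" and Q: "0 \<le> Q" and K: "2 \<le> K"
  shows "ennreal (1 / (v * (real K - 1) + Q))
    \<le> (\<integral>\<^sup>+t. ennreal (ncchisq_laplace v Q K t) * indicator {0..} t \<partial>lborel)"
proof -
  define r where "r = real K + Q / v"
  have "0 \<le> Q / v" using Q v by simp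
  then have r: "1 < r" unfolding r_def using K by linarith
  have "v * (r - 1) = v * (real K - 1) + Q"
    unfolding r_def using v by (simp add: field_simps)
  then have "ennreal (1 / (v * (real K - 1) + Q))
      = (\<integral>\<^sup>+t. ennreal ((1 + v * t) powr (- r)) * indicator {0..} t \<partial>lborel)"
    using nn_integral_affine_powr_neg[OF v r] by simp
  also have "\<dots> \<le> (\<integral>\<^sup>+t. ennreal (ncchisq_laplace v Q K t) * indicator {0..} t \<partial>lborel)"
    using ncchisq_laplace_ge[OF v _ Q] unfolding r_def
    by (intro nn_integral_mono) (simp add: ennreal_leI split: split_indicator)
  finally show ?thesis .
qed

lemma one_div_le_div_N_minus_two:
  fixes N :: nat and \<sigma> P :: real
  assumes N: "3 \<le> N" and \<sigma>: "0 < \<sigma>" and P: "0 \<le> P"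
  shows "1 / (P + \<sigma>^2) \<le> real N / (\<sigma>^2 * (real N - 2) + real N * P)"
proof -
  have "0 < \<sigma>^2 * (real N - 2) + real N * P"
    using N \<sigma> P by (simp add: add_pos_nonneg)
  moreover have "\<sigma>^2 * (real N - 2) + real N * P \<le> real N * (P + \<sigma>^2)"
    using \<sigma> by (simp add: algebra_simps)
  ultimately have "real N / (real N * (P + \<sigma>^2)) \<le> real N / (\<sigma>^2 * (real N - 2) + real N * P)"
    by (intro divide_left_mono) simp_all
  then show ?thesis
    using N by simp
qed

lemma div_N_minus_four_le:
  fixes N :: nat and \<sigma> P :: real
  assumes N: "6 \<le> N" and \<sigma>: "0 < \<sigma>" and P: "0 \<le> P"
  shows "real N / (\<sigma>^2 * (real N - 4) + real N * P) \<le> (1 + 12 / N) / (P + \<sigma>^2)"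
proof -
  have "real N * real N \<le> (real N + 12) * (real N - 4)"
    using N by (simp add: algebra_simps)
  then have "real N \<le> (1 + 12 / real N) * (real N - 4)"
    using N by (simp add: field_simps)
  then have "real N * \<sigma>^2 \<le> (1 + 12 / real N) * (\<sigma>^2 * (real N - 4))"
    by (metis mult.assoc mult.commute mult_right_mono zero_le_power2)
  moreover have "real N * P \<le> (1 + 12 / real N) * (real N * P)"
    using P by (simp add: algebra_simps)
  ultimately have "real N * (P + \<sigma>^2) \<le> (1 + 12 / real N) * (\<sigma>^2 * (real N - 4) + real N * P)"
    by (simp only: distrib_left)
  moreover have "0 < \<sigma>^2 * (real N - 4) + real N * P"
    using N \<sigma> P by (simp add: add_pos_nonneg)
  moreover have "0 < P + \<sigma>^2"
    using P \<sigma> by (simp add: add_nonneg_pos)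
  ultimately show ?thesis
    by (simp add: field_simps)
qed

lemma (in prob_space) nn_integral_inverse_svar_normal_bounds:
  fixes N :: nat and \<epsilon> :: "nat \<Rightarrow> 'a \<Rightarrow> real" and \<mu> :: "nat \<Rightarrow> real"
  assumes \<sigma>: "0 < \<sigma>" and N: "even N" "6 \<le> N"
    and indep: "indep_vars (\<lambda>_. borel) \<epsilon> {1..N+1}"
    and distr: "\<And>i. i \<in> {1..N+1} \<Longrightarrow> distributed M lborel (\<epsilon> i) (\<lambda>x. ennreal (normal_density 0 \<sigma> x))"
  shows "ennreal (1 / (svar N \<mu> + \<sigma>^2)) \<le> (\<integral>\<^sup>+\<omega>. ennreal (1 / svar N (\<lambda>i. \<mu> i + \<epsilon> i \<omega>)) \<partial>M)"
    and "(\<integral>\<^sup>+\<omega>. ennreal (1 / svar N (\<lambda>i. \<mu> i + \<epsilon> i \<omega>)) \<partial>M) \<le> ennreal ((1 + 12 / N) / (svar N \<mu> + \<sigma>^2))"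
proof -
  define P where "P = svar N \<mu>"
  define T where "T \<omega> = real N * svar N (\<lambda>i. \<mu> i + \<epsilon> i \<omega>)" for \<omega>
  define K where "K = N div 2"
  define v where "v = 2 * \<sigma>^2"
  define J where "J = (\<integral>\<^sup>+t. ennreal (ncchisq_laplace v (real N * P) K t) * indicator {0..} t \<partial>lborel)"
  have P: "0 \<le> P" unfolding P_def by (rule svar_nonneg)
  have v: "0 < v" unfolding v_def using \<sigma> by simp
  have NK: "real N = 2 * real K" and K: "3 \<le> K"
    unfolding K_def using N by auto
  have [measurable]: "\<And>i. i \<in> {1..N+1} \<Longrightarrow> \<epsilon> i \<in> borel_measurable M"
    using distributed_measurable[OF distr] by simp
  have [measurable]: "T \<in> borel_measurable M"
    unfolding T_def by measurable
  have laplace: "(\<integral>\<^sup>+\<omega>. ennreal (exp (- (t * T \<omega>))) \<partial>M) = ennreal (ncchisq_laplace v (real N * P) K t)"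
    if "0 \<le> t" for t
  proof (cases "t = 0")
    case True
    then show ?thesis by (simp add: ncchisq_laplace_def emeasure_space_1)
  next
    case False
    with that have "0 < t" by simp
    from nn_integral_exp_neg_svar_normal[OF \<sigma> N(1) this indep distr, of \<mu>]
    show ?thesis
      unfolding T_def ncchisq_laplace_def P_def K_def v_def by (simp add: mult_ac)
  qed
  have J_eq: "(\<integral>\<^sup>+t. (\<integral>\<^sup>+\<omega>. ennreal (exp (- (t * T \<omega>))) \<partial>M) * indicator {0..} t \<partial>lborel) = J"
    unfolding J_def using laplace by (intro nn_integral_cong) (simp split: split_indicator)
  have J_le: "J \<le> ennreal (1 / (v * (real K - 2) + real N * P))"
    unfolding J_def using v P K by (intro nn_integral_ncchisq_laplace_le) simp_all
  have J_ge: "ennreal (1 / (v * (real K - 1) + real N * P)) \<le> J"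
    unfolding J_def using v P K by (intro nn_integral_ncchisq_laplace_ge) simp_all
  have "(\<integral>\<^sup>+\<omega>. ennreal (1 / T \<omega>) \<partial>M) = J"
    using J_le unfolding J_eq[symmetric]
    by (intro nn_integral_inverse_eq_Laplace) (auto simp: T_def svar_nonneg top_unique)
  moreover have "ennreal (1 / svar N (\<lambda>i. \<mu> i + \<epsilon> i \<omega>)) = ennreal (real N) * ennreal (1 / T \<omega>)" for \<omega>
    unfolding T_def using N by (simp add: svar_nonneg flip: ennreal_mult)
  ultimately have E_eq: "(\<integral>\<^sup>+\<omega>. ennreal (1 / svar N (\<lambda>i. \<mu> i + \<epsilon> i \<omega>)) \<partial>M) = ennreal (real N) * J"
    by (simp add: nn_integral_cmult)
  have v_K: "v * (real K - 1) = \<sigma>^2 * (real N - 2)" "v * (real K - 2) = \<sigma>^2 * (real N - 4)"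
    unfolding v_def NK by (simp_all add: algebra_simps)
  have "ennreal (1 / (P + \<sigma>^2)) \<le> ennreal (real N / (v * (real K - 1) + real N * P))"
    using one_div_le_div_N_minus_two[of N \<sigma> P] N \<sigma> P by (intro ennreal_leI) (simp add: v_K)
  also have "\<dots> \<le> ennreal (real N) * J"
    using J_ge v K P by (simp add: divide_inverse ennreal_mult mult_left_mono add_pos_nonneg)
  finally show "ennreal (1 / (P + \<sigma>^2)) \<le> (\<integral>\<^sup>+\<omega>. ennreal (1 / svar N (\<lambda>i. \<mu> i + \<epsilon> i \<omega>)) \<partial>M)"
    unfolding E_eq P_def .
  have "ennreal (real N) * J \<le> ennreal (real N / (v * (real K - 2) + real N * P))"
    using J_le v K P by (simp add: divide_inverse ennreal_mult mult_left_mono add_pos_nonneg)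
  also have "\<dots> \<le> ennreal ((1 + 12 / N) / (P + \<sigma>^2))"
    using div_N_minus_four_le[of N \<sigma> P] N \<sigma> P by (intro ennreal_leI) (simp add: v_K)
  finally show "(\<integral>\<^sup>+\<omega>. ennreal (1 / svar N (\<lambda>i. \<mu> i + \<epsilon> i \<omega>)) \<partial>M) \<le> ennreal ((1 + 12 / N) / (svar N \<mu> + \<sigma>^2))"
    unfolding E_eq P_def .
qed

section \<open>Conditioning on a function of one of two independent parts\<close>

lemma (in finite_measure) AE_ge_of_set_integral_ge:
  fixes g :: "'a \<Rightarrow> real"
  assumes sub: "subalgebra M F" and [measurable]: "g \<in> borel_measurable F" and g: "integrable M g"
    and ge: "\<And>A. A \<in> sets F \<Longrightarrow> c * measure M A \<le> (\<integral>\<omega>\<in>A. g \<omega> \<partial>M)"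
  shows "AE \<omega> in M. c \<le> g \<omega>"
proof -
  define Z where "Z = {\<omega> \<in> space M. g \<omega> < c}"
  have "space F = space M"
    using sub by (simp add: subalgebra_def)
  moreover have "{\<omega> \<in> space F. g \<omega> < c} \<in> sets F"
    by measurable
  ultimately have ZF: "Z \<in> sets F"
    by (simp add: Z_def)
  then have [measurable]: "Z \<in> sets M" using sub by (auto simp: subalgebra_def)
  let ?k = "\<lambda>\<omega>. indicator Z \<omega> * (c - g \<omega>)"
  have k: "integrable M ?k"
    using integrable_mult_indicator[of Z M "\<lambda>\<omega>. c - g \<omega>"] g by simp
  have k0: "AE \<omega> in M. 0 \<le> ?k \<omega>"
    by (auto simp: Z_def indicator_def)
  have "(\<integral>\<omega>. ?k \<omega> \<partial>M) = (\<integral>\<omega>. c * indicator Z \<omega> - indicator Z \<omega> * g \<omega> \<partial>M)"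
    by (simp add: algebra_simps)
  also have "\<dots> = (\<integral>\<omega>. c * indicator Z \<omega> \<partial>M) - (\<integral>\<omega>. indicator Z \<omega> * g \<omega> \<partial>M)"
    using g integrable_mult_indicator[of Z M g]
    by (intro Bochner_Integration.integral_diff) (auto simp: emeasure_eq_measure)
  also have "\<dots> = c * measure M Z - (\<integral>\<omega>\<in>Z. g \<omega> \<partial>M)"
    by (simp add: set_lebesgue_integral_def)
  also have "\<dots> \<le> 0"
    using ge[OF ZF] by simp
  finally have "AE \<omega> in M. ?k \<omega> = 0"
    using integral_nonneg_AE[OF k0] integral_nonneg_eq_0_iff_AE[OF k k0] by simp
  then show ?thesis
    using AE_space by eventually_elim (auto simp: Z_def indicator_def)
qed

lemma real_cond_exp_bounds:
  fixes f :: "'a \<Rightarrow> real"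
  assumes "prob_space M" and sub: "subalgebra M F"
    and [measurable]: "f \<in> borel_measurable M" and f: "\<And>\<omega>. \<omega> \<in> space M \<Longrightarrow> 0 \<le> f \<omega>"
    and c: "0 \<le> c\<^sub>1" "0 \<le> c\<^sub>2"
    and bounds: "\<And>A. A \<in> sets F \<Longrightarrow> ennreal c\<^sub>1 * emeasure M A \<le> (\<integral>\<^sup>+\<omega>. indicator A \<omega> * ennreal (f \<omega>) \<partial>M)
                    \<and> (\<integral>\<^sup>+\<omega>. indicator A \<omega> * ennreal (f \<omega>) \<partial>M) \<le> ennreal c\<^sub>2 * emeasure M A"
  shows "AE \<omega> in M. c\<^sub>1 \<le> real_cond_exp M F f \<omega> \<and> real_cond_exp M F f \<omega> \<le> c\<^sub>2"
proof -
  interpret prob_space M by fact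
  interpret sigma_finite_subalgebra M F
    by (rule sigma_finite_subalgebra.intro[OF sub prob_space_imp_sigma_finite[OF
          prob_space_restr_to_subalg[OF sub prob_space_axioms]]])
  have sets_F: "A \<in> sets F \<Longrightarrow> A \<in> sets M" for A
    using sub by (auto simp: subalgebra_def)
  have nn_integral_indicator: "(\<integral>\<^sup>+\<omega>. indicator A \<omega> * ennreal (f \<omega>) \<partial>M) = ennreal (\<integral>\<omega>\<in>A. f \<omega> \<partial>M)"
    if "A \<in> sets M" "integrable M f" for A
  proof -
    have "(\<integral>\<^sup>+\<omega>. indicator A \<omega> * ennreal (f \<omega>) \<partial>M) = (\<integral>\<^sup>+\<omega>. ennreal (indicator A \<omega> * f \<omega>) \<partial>M)"
      by (intro nn_integral_cong) (simp add: indicator_def)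
    also have "\<dots> = ennreal (\<integral>\<omega>. indicator A \<omega> * f \<omega> \<partial>M)"
      using that f integrable_mult_indicator[of A M f] by (intro nn_integral_eq_integral) auto
    finally show ?thesis
      by (simp add: set_lebesgue_integral_def)
  qed
  have "space M \<in> sets F"
    using sub sets.top[of F] by (simp add: subalgebra_def)
  then have "(\<integral>\<^sup>+\<omega>. indicator (space M) \<omega> * ennreal (f \<omega>) \<partial>M) \<le> ennreal c\<^sub>2"
    using bounds[of "space M"] by (simp add: emeasure_space_1)
  moreover have "(\<integral>\<^sup>+\<omega>. indicator (space M) \<omega> * ennreal (f \<omega>) \<partial>M) = (\<integral>\<^sup>+\<omega>. ennreal (f \<omega>) \<partial>M)"
    by (intro nn_integral_cong) simp
  ultimately have "(\<integral>\<^sup>+\<omega>. ennreal (f \<omega>) \<partial>M) \<le> ennreal c\<^sub>2"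
    by simp
  then have "(\<integral>\<^sup>+\<omega>. ennreal (f \<omega>) \<partial>M) < \<infinity>"
    by (rule le_less_trans) simp
  then have int_f [measurable]: "integrable M f"
    using f by (intro integrableI_nonneg) auto
  have set_bounds: "c\<^sub>1 * measure M A \<le> (\<integral>\<omega>\<in>A. real_cond_exp M F f \<omega> \<partial>M)
      \<and> (\<integral>\<omega>\<in>A. real_cond_exp M F f \<omega> \<partial>M) \<le> c\<^sub>2 * measure M A" if A: "A \<in> sets F" for A
  proof -
    have "0 \<le> (\<integral>\<omega>\<in>A. f \<omega> \<partial>M)"
      unfolding set_lebesgue_integral_def by (intro Bochner_Integration.integral_nonneg) (simp add: f)
    then show ?thesis
      using bounds[OF A] c real_cond_exp_intA[OF int_f A]
      by (simp add: nn_integral_indicator[OF sets_F[OF A] int_f] emeasure_eq_measure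
          ennreal_le_iff flip: ennreal_mult)
  qed
  have "AE \<omega> in M. c\<^sub>1 \<le> real_cond_exp M F f \<omega>"
    using set_bounds real_cond_exp_int(1)[OF int_f] by (intro AE_ge_of_set_integral_ge[OF sub]) auto
  moreover have "AE \<omega> in M. - c\<^sub>2 \<le> - real_cond_exp M F f \<omega>"
  proof (rule AE_ge_of_set_integral_ge[OF sub])
    show "integrable M (\<lambda>\<omega>. - real_cond_exp M F f \<omega>)"
      using real_cond_exp_int(1)[OF int_f] by simp
    fix A assume A: "A \<in> sets F"
    have "(\<integral>\<omega>\<in>A. - real_cond_exp M F f \<omega> \<partial>M) = - (\<integral>\<omega>\<in>A. real_cond_exp M F f \<omega> \<partial>M)"
      by (simp add: set_lebesgue_integral_def)
    then show "- c\<^sub>2 * measure M A \<le> (\<integral>\<omega>\<in>A. - real_cond_exp M F f \<omega> \<partial>M)"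
      using set_bounds[OF A] by simp
  qed simp
  ultimately show ?thesis
    by eventually_elim simp
qed

lemma (in prob_space) real_cond_exp_bounds_of_indep:
  fixes G :: "'b \<Rightarrow> real" and H :: "'b \<times> 'b \<Rightarrow> real" and X Y :: "'a \<Rightarrow> real"
  assumes indep: "indep_var P1 R1 P2 R2"
    and [measurable]: "G \<in> borel_measurable P1" "H \<in> borel_measurable (P1 \<Otimes>\<^sub>M P2)"
    and H: "\<And>z. 0 \<le> H z" and c: "0 \<le> c\<^sub>1" "0 \<le> c\<^sub>2"
    and inner: "\<And>r. r \<in> space P1 \<Longrightarrow> ennreal c\<^sub>1 \<le> (\<integral>\<^sup>+\<omega>. ennreal (H (r, R2 \<omega>)) \<partial>M)
                   \<and> (\<integral>\<^sup>+\<omega>. ennreal (H (r, R2 \<omega>)) \<partial>M) \<le> ennreal c\<^sub>2"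
    and X: "\<And>\<omega>. \<omega> \<in> space M \<Longrightarrow> X \<omega> = G (R1 \<omega>)"
    and Y: "\<And>\<omega>. \<omega> \<in> space M \<Longrightarrow> Y \<omega> = H (R1 \<omega>, R2 \<omega>)"
  shows "AE \<omega> in M. c\<^sub>1 \<le> real_cond_exp M (vimage_algebra (space M) X borel) Y \<omega>
                   \<and> real_cond_exp M (vimage_algebra (space M) X borel) Y \<omega> \<le> c\<^sub>2"
proof -
  have [measurable]: "R1 \<in> measurable M P1" "R2 \<in> measurable M P2"
    using indep by (rule indep_var_rv1, rule indep_var_rv2)
  have [measurable]: "X \<in> borel_measurable M"
    by (subst measurable_cong[OF X]) simp_all
  have [measurable]: "Y \<in> borel_measurable M"
    by (subst measurable_cong[OF Y]) simp_all
  let ?F = "vimage_algebra (space M) X borel"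
  have sets_F: "sets ?F = {X -` B \<inter> space M | B. B \<in> sets borel}"
    by (rule sets_vimage_algebra2) simp
  have sub: "subalgebra M ?F"
    unfolding subalgebra_def using sets_F by auto
  interpret D1: prob_space "distr M P1 R1"
    by (rule prob_space_distr) simp
  interpret D2: prob_space "distr M P2 R2"
    by (rule prob_space_distr) simp
  interpret D12: pair_sigma_finite "distr M P1 R1" "distr M P2 R2"
    by (intro pair_sigma_finite.intro prob_space_imp_sigma_finite D1.prob_space_axioms D2.prob_space_axioms)
  define I where "I r = (\<integral>\<^sup>+\<omega>. ennreal (H (r, R2 \<omega>)) \<partial>M)" for r
  have I_eq: "(\<integral>\<^sup>+r'. ennreal (H (r, r')) \<partial>distr M P2 R2) = I r" if "r \<in> space P1" for r
    unfolding I_def using that by (intro nn_integral_distr) simp_all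
  show ?thesis
  proof (rule real_cond_exp_bounds[OF prob_space_axioms sub])
    show "0 \<le> Y \<omega>" if "\<omega> \<in> space M" for \<omega>
      using H that by (simp add: Y)
    fix A assume A_F: "A \<in> sets ?F"
    then obtain B where [measurable]: "B \<in> sets borel" and A: "A = X -` B \<inter> space M"
      using sets_F by auto
    have "(\<integral>\<^sup>+\<omega>. indicator A \<omega> * ennreal (Y \<omega>) \<partial>M)
        = (\<integral>\<^sup>+z. indicator B (G (fst z)) * ennreal (H z) \<partial>distr M (P1 \<Otimes>\<^sub>M P2) (\<lambda>\<omega>. (R1 \<omega>, R2 \<omega>)))"
      by (subst nn_integral_distr) (auto simp: A X Y intro!: nn_integral_cong split: split_indicator)
    also have "\<dots> = (\<integral>\<^sup>+z. indicator B (G (fst z)) * ennreal (H z) \<partial>(distr M P1 R1 \<Otimes>\<^sub>M distr M P2 R2))"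
      using indep by (simp add: indep_var_distribution_eq)
    also have "\<dots> = (\<integral>\<^sup>+r. (\<integral>\<^sup>+r'. indicator B (G r) * ennreal (H (r, r')) \<partial>distr M P2 R2) \<partial>distr M P1 R1)"
      by (subst D2.nn_integral_fst[symmetric]) simp_all
    also have "\<dots> = (\<integral>\<^sup>+r. indicator B (G r) * I r \<partial>distr M P1 R1)"
      by (intro nn_integral_cong) (simp add: nn_integral_cmult I_eq)
    finally have integral_A: "(\<integral>\<^sup>+\<omega>. indicator A \<omega> * ennreal (Y \<omega>) \<partial>M)
        = (\<integral>\<^sup>+r. indicator B (G r) * I r \<partial>distr M P1 R1)" .
    have "A \<in> sets M"
      using sub A_F by (auto simp: subalgebra_def)
    then have "emeasure M A = (\<integral>\<^sup>+\<omega>. indicator A \<omega> \<partial>M)"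
      by simp
    also have "\<dots> = (\<integral>\<^sup>+\<omega>. indicator B (G (R1 \<omega>)) \<partial>M)"
      by (intro nn_integral_cong) (simp add: A X split: split_indicator)
    also have "\<dots> = (\<integral>\<^sup>+r. indicator B (G r) \<partial>distr M P1 R1)"
      by (rule nn_integral_distr[symmetric]) simp_all
    finally have emeasure_A: "emeasure M A = (\<integral>\<^sup>+r. indicator B (G r) \<partial>distr M P1 R1)" .
    have "ennreal c\<^sub>1 * emeasure M A = (\<integral>\<^sup>+r. indicator B (G r) * ennreal c\<^sub>1 \<partial>distr M P1 R1)"
      unfolding emeasure_A by (subst nn_integral_cmult[symmetric]) (simp_all add: mult.commute)
    also have "\<dots> \<le> (\<integral>\<^sup>+r. indicator B (G r) * I r \<partial>distr M P1 R1)"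
      using inner by (intro nn_integral_mono) (auto simp: I_def intro: mult_left_mono)
    finally show "ennreal c\<^sub>1 * emeasure M A \<le> (\<integral>\<^sup>+\<omega>. indicator A \<omega> * ennreal (Y \<omega>) \<partial>M)
        \<and> (\<integral>\<^sup>+\<omega>. indicator A \<omega> * ennreal (Y \<omega>) \<partial>M) \<le> ennreal c\<^sub>2 * emeasure M A"
    proof (intro conjI)
      have "(\<integral>\<^sup>+r. indicator B (G r) * I r \<partial>distr M P1 R1)
          \<le> (\<integral>\<^sup>+r. indicator B (G r) * ennreal c\<^sub>2 \<partial>distr M P1 R1)"
        using inner by (intro nn_integral_mono) (auto simp: I_def intro: mult_left_mono)
      also have "\<dots> = ennreal c\<^sub>2 * emeasure M A"
        unfolding emeasure_A by (subst nn_integral_cmult[symmetric]) (simp_all add: mult.commute)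
      finally show "(\<integral>\<^sup>+\<omega>. indicator A \<omega> * ennreal (Y \<omega>) \<partial>M) \<le> ennreal c\<^sub>2 * emeasure M A"
        unfolding integral_A .
    qed (simp add: integral_A)
  qed (use c in simp_all)
qed

section \<open>The filter as a function of the primitive random variables\<close>

lemma (in prob_space) indep_normal_combinations:
  fixes Z :: "'i \<Rightarrow> 'a \<Rightarrow> real" and kv kw :: "nat \<Rightarrow> 'i"
  assumes indep: "indep_vars (\<lambda>_. borel) Z I"
    and I: "kv ` S \<subseteq> I" "kw ` S \<subseteq> I"
    and inj: "inj kv" "inj kw" "\<And>i j. kv i \<noteq> kw j"
    and normal: "\<And>i. i \<in> S \<Longrightarrow> distributed M lborel (Z (kv i)) (\<lambda>x. ennreal (normal_density 0 1 x))"
      "\<And>i. i \<in> S \<Longrightarrow> distributed M lborel (Z (kw i)) (\<lambda>x. ennreal (normal_density 0 1 x))"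
    and b: "b \<noteq> 0"
  shows "indep_vars (\<lambda>_. borel) (\<lambda>i \<omega>. a * Z (kv i) \<omega> + b * Z (kw i) \<omega>) S"
    and "\<And>i. i \<in> S \<Longrightarrow> distributed M lborel (\<lambda>\<omega>. a * Z (kv i) \<omega> + b * Z (kw i) \<omega>)
            (\<lambda>x. ennreal (normal_density 0 (sqrt (a^2 + b^2)) x))"
proof -
  define K where "K i = {kv i, kw i}" for i
  have "indep_vars (\<lambda>i. PiM (K i) (\<lambda>_. borel)) (\<lambda>i \<omega>. restrict (\<lambda>j. Z j \<omega>) (K i)) S"
    using I inj by (intro indep_vars_restrict[OF indep]) (auto simp: K_def disjoint_family_on_def dest: injD)
  then have "indep_vars (\<lambda>_. borel) (\<lambda>i \<omega>. (\<lambda>r. a * r (kv i) + b * r (kw i)) (restrict (\<lambda>j. Z j \<omega>) (K i))) S"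
    by (rule indep_vars_compose2) (simp add: K_def)
  then show "indep_vars (\<lambda>_. borel) (\<lambda>i \<omega>. a * Z (kv i) \<omega> + b * Z (kw i) \<omega>) S"
    by (rule indep_vars_cong[THEN iffD1, rotated -1]) (auto simp: K_def)
next
  fix i assume i: "i \<in> S"
  have "indep_var (PiM {kv i} (\<lambda>_. borel)) (\<lambda>\<omega>. restrict (\<lambda>j. Z j \<omega>) {kv i})
                  (PiM {kw i} (\<lambda>_. borel)) (\<lambda>\<omega>. restrict (\<lambda>j. Z j \<omega>) {kw i})"
    using i I inj by (intro indep_var_restrict[OF indep]) auto
  then have "indep_var borel ((\<lambda>r. a * r (kv i)) \<circ> (\<lambda>\<omega>. restrict (\<lambda>j. Z j \<omega>) {kv i}))
                       borel ((\<lambda>r. b * r (kw i)) \<circ> (\<lambda>\<omega>. restrict (\<lambda>j. Z j \<omega>) {kw i}))"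
    by (rule indep_var_compose) simp_all
  then have indep_i: "indep_var borel (\<lambda>\<omega>. a * Z (kv i) \<omega>) borel (\<lambda>\<omega>. b * Z (kw i) \<omega>)"
    by (simp add: comp_def)
  have "distributed M lborel (\<lambda>\<omega>. 0 + b * Z (kw i) \<omega>) (\<lambda>x. ennreal (normal_density (0 + b * 0) (\<bar>b\<bar> * 1) x))"
    using b by (intro normal_density_affine normal(2)[OF i]) auto
  then have b_normal: "distributed M lborel (\<lambda>\<omega>. b * Z (kw i) \<omega>) (\<lambda>x. ennreal (normal_density 0 \<bar>b\<bar> x))"
    by simp
  show "distributed M lborel (\<lambda>\<omega>. a * Z (kv i) \<omega> + b * Z (kw i) \<omega>)
          (\<lambda>x. ennreal (normal_density 0 (sqrt (a^2 + b^2)) x))"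
  proof (cases "a = 0")
    case True
    then show ?thesis using b_normal by simp
  next
    case False
    have "distributed M lborel (\<lambda>\<omega>. 0 + a * Z (kv i) \<omega>) (\<lambda>x. ennreal (normal_density (0 + a * 0) (\<bar>a\<bar> * 1) x))"
      using False by (intro normal_density_affine normal(1)[OF i]) auto
    then have "distributed M lborel (\<lambda>\<omega>. a * Z (kv i) \<omega> + b * Z (kw i) \<omega>)
        (\<lambda>x. ennreal (normal_density (0 + 0) (sqrt (\<bar>a\<bar>^2 + \<bar>b\<bar>^2)) x))"
      using False b b_normal by (intro add_indep_normal[OF indep_i]) simp_all
    then show ?thesis by simp
  qed
qed

lemma measurable_component_any[measurable]:
  "(\<lambda>r. r j) \<in> borel_measurable (PiM J (\<lambda>_. (borel :: real measure)))"
proof (cases "j \<in> J")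
  case True
  then show ?thesis by (rule measurable_component_singleton)
next
  case False
  then have "r j = undefined" if "r \<in> space (PiM J (\<lambda>_. (borel :: real measure)))" for r
    using that by (auto simp: space_PiM PiE_def extensional_def)
  then show ?thesis
    by (subst measurable_cong[where g = "\<lambda>_. undefined"]) simp_all
qed

(* The signal and the particles as functions of one realisation r of the whole family of
  primitive random variables, indexed by rvidx. *)
primrec signal_rec :: "real \<Rightarrow> real \<Rightarrow> (rvidx \<Rightarrow> real) \<Rightarrow> nat \<Rightarrow> real" where
  "signal_rec A B r 0 = r IX0"
| "signal_rec A B r (Suc k) = A * signal_rec A B r k + B * r (IW (Suc k))"

definition enkf_rec :: "real \<Rightarrow> real \<Rightarrow> real \<Rightarrow> real \<Rightarrow> nat \<Rightarrow> nat \<Rightarrow> (rvidx \<Rightarrow> real) \<Rightarrow> nat \<Rightarrow> real" where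
  "enkf_rec A B C D N k r = enkf A B C D N (\<lambda>i. r (IXi i)) (\<lambda>j. C * signal_rec A B r j + D * r (IV j))
      (\<lambda>j i. r (IVp j i)) (\<lambda>j i. r (IWp j i)) k"

definition enkf_gain :: "real \<Rightarrow> real \<Rightarrow> real \<Rightarrow> real" where
  "enkf_gain C D p = C * p / (C^2 * p + D^2)"

lemma enkf_rec_0: "enkf_rec A B C D N 0 r = (\<lambda>i. r (IXi i))"
  by (simp add: enkf_rec_def)

lemma enkf_rec_Suc:
  "enkf_rec A B C D N (Suc k) r = (\<lambda>i. A * (enkf_rec A B C D N k r i
     + enkf_gain C D (svar N (enkf_rec A B C D N k r))
       * ((C * signal_rec A B r k + D * r (IV k)) - C * enkf_rec A B C D N k r i - D * r (IVp k i)))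
     + B * r (IWp (Suc k) i))"
  by (simp add: enkf_rec_def enkf_gain_def Let_def)

lemma signal_rec_measurable[measurable]:
  "(\<lambda>r. signal_rec A B r k) \<in> borel_measurable (PiM J (\<lambda>_. borel))"
proof (induction k)
  case (Suc k)
  note Suc[measurable]
  show ?case by simp
qed simp

lemma enkf_rec_measurable[measurable]:
  "(\<lambda>r. enkf_rec A B C D N k r i) \<in> borel_measurable (PiM J (\<lambda>_. borel))"
proof (induction k arbitrary: i)
  case 0
  then show ?case by (simp add: enkf_rec_0)
next
  case (Suc k)
  note Suc[measurable]
  show ?case unfolding enkf_rec_Suc enkf_gain_def by measurable
qed

lemma signal_rec_cong:
  "r' IX0 = r IX0 \<Longrightarrow> (\<And>j. r' (IW j) = r (IW j)) \<Longrightarrow> signal_rec A B r' k = signal_rec A B r k"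
  by (induction k) auto

lemma enkf_rec_cong:
  assumes eq: "\<And>j. j \<in> J \<Longrightarrow> r' j = r j"
    and J: "IX0 \<in> J" "\<And>j. IW j \<in> J" "\<And>j. IV j \<in> J" "\<And>i. i \<in> {1..N+1} \<Longrightarrow> IXi i \<in> J"
      "\<And>k i. k < n \<Longrightarrow> i \<in> {1..N+1} \<Longrightarrow> IVp k i \<in> J"
      "\<And>k i. k < n \<Longrightarrow> i \<in> {1..N+1} \<Longrightarrow> IWp (Suc k) i \<in> J"
  shows "k \<le> n \<Longrightarrow> i \<in> {1..N+1} \<Longrightarrow> enkf_rec A B C D N k r' i = enkf_rec A B C D N k r i"
proof (induction k arbitrary: i)
  case 0
  then show ?case using eq J by (simp add: enkf_rec_0)
next
  case (Suc k)
  have IH: "\<And>i. i \<in> {1..N+1} \<Longrightarrow> enkf_rec A B C D N k r' i = enkf_rec A B C D N k r i"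
    using Suc by simp
  have "svar N (enkf_rec A B C D N k r') = svar N (enkf_rec A B C D N k r)"
    by (rule svar_cong) (rule IH)
  moreover have "signal_rec A B r' k = signal_rec A B r k"
    by (rule signal_rec_cong) (use eq J in auto)
  ultimately show ?case
    using IH[OF Suc(3)] Suc eq J(3,5,6) by (simp add: enkf_rec_Suc)
qed

lemma svar_enkf_rec_Suc:
  fixes A B C D :: real and N k :: nat
  defines "g \<equiv> \<lambda>r. enkf_gain C D (svar N (enkf_rec A B C D N k r))"
  shows "svar N (enkf_rec A B C D N (Suc k) r) = svar N (\<lambda>i. A * (1 - g r * C) * enkf_rec A B C D N k r i
      + (- A * g r * D) * r (IVp k i) + B * r (IWp (Suc k) i))"
proof -
  let ?Y = "C * signal_rec A B r k + D * r (IV k)"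
  have "enkf_rec A B C D N (Suc k) r = (\<lambda>i. (A * (1 - g r * C) * enkf_rec A B C D N k r i
      + (- A * g r * D) * r (IVp k i) + B * r (IWp (Suc k) i)) + A * g r * ?Y)"
    unfolding enkf_rec_Suc g_def by (simp add: algebra_simps)
  \<comment> \<open>the observation enters every particle through the same shift\<close>
  then show ?thesis by (simp add: svar_shift)
qed

lemma phi_eq_enkf_step_variance:
  fixes A B C D p :: real
  assumes D: "D \<noteq> 0" and p: "0 \<le> p"
  defines "g \<equiv> enkf_gain C D p"
  shows "phi A B C D p = (A * (1 - g * C))^2 * p + (A * g * D)^2 + B^2"
proof -
  define d where "d = C^2 * p + D^2"
  have d: "0 < d" unfolding d_def using D p by (simp add: add_nonneg_pos)
  have d': "0 < (C/D)^2 * p + 1" using D p by (simp add: add_nonneg_pos)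
  have g: "g = C * p / d" and gain: "1 - g * C = D^2 / d"
    unfolding g_def enkf_gain_def d_def[symmetric] using d by (simp_all add: field_simps power2_eq_square d_def)
  have "(A * (1 - g * C))^2 * p + (A * g * D)^2 = A^2 * D^2 * p * (D^2 + C^2 * p) / d^2"
    unfolding gain g using d by (simp add: field_simps power2_eq_square, unfold d_def, algebra)
  also have "\<dots> = A^2 * D^2 * p / d"
    using d by (simp add: power2_eq_square add.commute d_def)
  also have "\<dots> = A^2 * p / ((C/D)^2 * p + 1)"
    using d d' D unfolding d_def by (simp add: field_simps power2_eq_square)
  finally show ?thesis
    unfolding phi_def Let_def using d' by (simp add: field_simps)
qed

lemma phi_pos:
  assumes "B \<noteq> 0" "D \<noteq> 0" "0 \<le> p"
  shows "0 < phi A B C D p"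
  using assms by (simp add: phi_eq_enkf_step_variance add_nonneg_pos)

(* phi q is exactly the sample variance of the deterministic part plus the noise variance. *)
lemma (in prob_space) nn_integral_phi_div_svar_enkf_step:
  fixes A B C D :: real and x :: "nat \<Rightarrow> real" and \<epsilon> :: "nat \<Rightarrow> 'a \<Rightarrow> real"
  assumes B: "B \<noteq> 0" and D: "D \<noteq> 0" and N: "even N" "6 \<le> N"
  defines "q \<equiv> svar N x"
  defines "g \<equiv> enkf_gain C D q"
  assumes indep: "indep_vars (\<lambda>_. borel) \<epsilon> {1..N+1}"
    and distr: "\<And>i. i \<in> {1..N+1} \<Longrightarrow>
      distributed M lborel (\<epsilon> i) (\<lambda>y. ennreal (normal_density 0 (sqrt ((A * g * D)^2 + B^2)) y))"
  shows "1 \<le> (\<integral>\<^sup>+\<omega>. ennreal (phi A B C D q / svar N (\<lambda>i. A * (1 - g * C) * x i + \<epsilon> i \<omega>)) \<partial>M)"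
    and "(\<integral>\<^sup>+\<omega>. ennreal (phi A B C D q / svar N (\<lambda>i. A * (1 - g * C) * x i + \<epsilon> i \<omega>)) \<partial>M)
      \<le> ennreal (1 + 12 / N)"
proof -
  define \<sigma> where "\<sigma> = sqrt ((A * g * D)^2 + B^2)"
  have \<sigma>: "0 < \<sigma>" unfolding \<sigma>_def using B by (simp add: add_nonneg_pos)
  have q: "0 \<le> q" unfolding q_def by (rule svar_nonneg)
  have phi_q: "svar N (\<lambda>i. A * (1 - g * C) * x i) + \<sigma>^2 = phi A B C D q"
    using phi_eq_enkf_step_variance[OF D q] unfolding svar_scale \<sigma>_def g_def q_def by simp
  have phi_pos': "0 < phi A B C D q" using phi_pos[OF B D q] .
  let ?E = "\<integral>\<^sup>+\<omega>. ennreal (1 / svar N (\<lambda>i. A * (1 - g * C) * x i + \<epsilon> i \<omega>)) \<partial>M"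
  have [measurable]: "\<And>i. i \<in> {1..N+1} \<Longrightarrow> \<epsilon> i \<in> borel_measurable M"
    using distributed_measurable[OF distr] by simp
  have "ennreal (phi A B C D q / svar N (\<lambda>i. A * (1 - g * C) * x i + \<epsilon> i \<omega>))
      = ennreal (phi A B C D q) * ennreal (1 / svar N (\<lambda>i. A * (1 - g * C) * x i + \<epsilon> i \<omega>))" for \<omega>
    using phi_pos' by (simp add: svar_nonneg flip: ennreal_mult)
  then have E_eq: "(\<integral>\<^sup>+\<omega>. ennreal (phi A B C D q / svar N (\<lambda>i. A * (1 - g * C) * x i + \<epsilon> i \<omega>)) \<partial>M)
      = ennreal (phi A B C D q) * ?E"
    by (simp only:) (rule nn_integral_cmult, measurable)
  have bounds: "ennreal (1 / phi A B C D q) \<le> ?E" "?E \<le> ennreal ((1 + 12 / N) / phi A B C D q)"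
    using nn_integral_inverse_svar_normal_bounds[OF \<sigma> N indep distr[folded \<sigma>_def],
        of "\<lambda>i. A * (1 - g * C) * x i"]
    by (simp_all add: phi_q)
  show "1 \<le> (\<integral>\<^sup>+\<omega>. ennreal (phi A B C D q / svar N (\<lambda>i. A * (1 - g * C) * x i + \<epsilon> i \<omega>)) \<partial>M)"
    using mult_left_mono[OF bounds(1), of "ennreal (phi A B C D q)"] phi_pos'
    by (simp add: E_eq flip: ennreal_mult)
  show "(\<integral>\<^sup>+\<omega>. ennreal (phi A B C D q / svar N (\<lambda>i. A * (1 - g * C) * x i + \<epsilon> i \<omega>)) \<partial>M)
      \<le> ennreal (1 + 12 / N)"
    using mult_left_mono[OF bounds(2), of "ennreal (phi A B C D q)"] phi_pos'
    by (simp add: E_eq flip: ennreal_mult)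
qed

lemma enkf_p_eq_svar_enkf_rec:
  assumes X0: "\<forall>\<omega>\<in>space M. X 0 \<omega> = X0 \<omega>"
    and XS: "\<forall>k. \<forall>\<omega>\<in>space M. X (Suc k) \<omega> = A * X k \<omega> + B * W (Suc k) \<omega>"
    and \<omega>: "\<omega> \<in> space M"
  shows "enkf_p A B C D N (\<lambda>i. xi0 i \<omega>) (\<lambda>j. C * X j \<omega> + D * V j \<omega>) (\<lambda>j i. Vp j i \<omega>) (\<lambda>j i. Wp j i \<omega>) k
    = svar N (enkf_rec A B C D N k (\<lambda>j. rvfam X0 V W xi0 Vp Wp j \<omega>))"
proof -
  have "X j \<omega> = signal_rec A B (\<lambda>j. rvfam X0 V W xi0 Vp Wp j \<omega>) j" for j
    by (induction j) (use X0 XS \<omega> in \<open>auto simp: rvfam_def\<close>)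
  then show ?thesis
    by (simp add: enkf_p_def enkf_rec_def rvfam_def)
qed

lemma (in prob_space) enkf_step_noise:
  fixes a b :: real
  assumes indep: "indep_vars (\<lambda>_. borel) (rvfam X0 V W xi0 Vp Wp) (rvidx_set N)"
    and Vp: "\<forall>k. \<forall>i\<in>{1..N+1}. distributed M lborel (Vp k i) (\<lambda>x. ennreal (normal_density 0 1 x))"
    and Wp: "\<forall>k. \<forall>i\<in>{1..N+1}. distributed M lborel (Wp k i) (\<lambda>x. ennreal (normal_density 0 1 x))"
    and b: "b \<noteq> 0"
  shows "indep_vars (\<lambda>_. borel) (\<lambda>i \<omega>. a * Vp n i \<omega> + b * Wp (Suc n) i \<omega>) {1..N+1}"
    and "\<And>i. i \<in> {1..N+1} \<Longrightarrow> distributed M lborel (\<lambda>\<omega>. a * Vp n i \<omega> + b * Wp (Suc n) i \<omega>)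
            (\<lambda>x. ennreal (normal_density 0 (sqrt (a^2 + b^2)) x))"
proof -
  have "indep_vars (\<lambda>_. borel) (\<lambda>i \<omega>. a * rvfam X0 V W xi0 Vp Wp (IVp n i) \<omega> + b * rvfam X0 V W xi0 Vp Wp (IWp (Suc n) i) \<omega>) {1..N+1}"
    using Vp Wp b by (intro indep_normal_combinations(1)[OF indep]) (auto simp: rvidx_set_def inj_def rvfam_def)
  then show "indep_vars (\<lambda>_. borel) (\<lambda>i \<omega>. a * Vp n i \<omega> + b * Wp (Suc n) i \<omega>) {1..N+1}"
    by (simp add: rvfam_def)
next
  fix i assume i: "i \<in> {1..N+1}"
  have "distributed M lborel (\<lambda>\<omega>. a * rvfam X0 V W xi0 Vp Wp (IVp n i) \<omega> + b * rvfam X0 V W xi0 Vp Wp (IWp (Suc n) i) \<omega>)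
      (\<lambda>x. ennreal (normal_density 0 (sqrt (a^2 + b^2)) x))"
    by (rule indep_normal_combinations(2)[OF indep _ _ _ _ _ _ _ b i, where kv = "IVp n" and kw = "IWp (Suc n)"])
      (use Vp Wp in \<open>auto simp: rvidx_set_def inj_def rvfam_def\<close>)
  then show "distributed M lborel (\<lambda>\<omega>. a * Vp n i \<omega> + b * Wp (Suc n) i \<omega>)
      (\<lambda>x. ennreal (normal_density 0 (sqrt (a^2 + b^2)) x))"
    by (simp add: rvfam_def)
qed

(* The noises used in the step from time n to n + 1 are independent of everything that
  determines the particles at time n, so conditioning on p n amounts to integrating out these
  noises for frozen particles. *)
lemma enkf_cond_exp_phi_div_bounds:
  fixes A B C D :: real and M :: "'a measure" and N n :: nat
  assumes B: "B \<noteq> 0" and D: "D \<noteq> 0" and "prob_space M" and N: "even N" "4 < N"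
    and indep: "prob_space.indep_vars M (\<lambda>_. borel) (rvfam X0 V W xi0 Vp Wp) (rvidx_set N)"
    and Vp: "\<forall>k. \<forall>i\<in>{1..N+1}. distributed M lborel (Vp k i) (\<lambda>x. ennreal (normal_density 0 1 x))"
    and Wp: "\<forall>k. \<forall>i\<in>{1..N+1}. distributed M lborel (Wp k i) (\<lambda>x. ennreal (normal_density 0 1 x))"
    and X0: "\<forall>\<omega>\<in>space M. X 0 \<omega> = X0 \<omega>"
    and XS: "\<forall>k. \<forall>\<omega>\<in>space M. X (Suc k) \<omega> = A * X k \<omega> + B * W (Suc k) \<omega>"
  defines "p \<equiv> \<lambda>k \<omega>. enkf_p A B C D N (\<lambda>i. xi0 i \<omega>) (\<lambda>j. C * X j \<omega> + D * V j \<omega>)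
                     (\<lambda>j i. Vp j i \<omega>) (\<lambda>j i. Wp j i \<omega>) k"
  shows "AE \<omega> in M. 1 \<le> real_cond_exp M (vimage_algebra (space M) (p n) borel)
                 (\<lambda>\<omega>. phi A B C D (p n \<omega>) / p (Suc n) \<omega>) \<omega>
        \<and> real_cond_exp M (vimage_algebra (space M) (p n) borel)
                 (\<lambda>\<omega>. phi A B C D (p n \<omega>) / p (Suc n) \<omega>) \<omega> \<le> 1 + 12 / real N"
proof -
  interpret prob_space M by fact
  let ?S = "{1..N+1}"
  define I\<^sub>2 where "I\<^sub>2 = IVp n ` ?S \<union> IWp (Suc n) ` ?S"
  define I\<^sub>1 where "I\<^sub>1 = rvidx_set N - I\<^sub>2"
  define rec where "rec \<omega> = (\<lambda>j. rvfam X0 V W xi0 Vp Wp j \<omega>)" for \<omega>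
  define R\<^sub>1 where "R\<^sub>1 \<omega> = restrict (rec \<omega>) I\<^sub>1" for \<omega>
  define R\<^sub>2 where "R\<^sub>2 \<omega> = restrict (rec \<omega>) I\<^sub>2" for \<omega>
  define G where "G r = svar N (enkf_rec A B C D N n r)" for r
  define g where "g r = enkf_gain C D (G r)" for r
  define H where "H z = phi A B C D (G (fst z)) / svar N (\<lambda>i. A * (1 - g (fst z) * C) * enkf_rec A B C D N n (fst z) i
      + (- A * g (fst z) * D) * snd z (IVp n i) + B * snd z (IWp (Suc n) i))" for z
  have indep_R: "indep_var (PiM I\<^sub>1 (\<lambda>_. borel)) R\<^sub>1 (PiM I\<^sub>2 (\<lambda>_. borel)) R\<^sub>2"
    unfolding R\<^sub>1_def R\<^sub>2_def rec_def
    by (rule indep_var_restrict[OF indep]) (auto simp: I\<^sub>1_def I\<^sub>2_def rvidx_set_def)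
  have particles_R\<^sub>1: "enkf_rec A B C D N k (R\<^sub>1 \<omega>) i = enkf_rec A B C D N k (rec \<omega>) i"
    if "k \<le> n" "i \<in> ?S" for k i \<omega>
    using that by (intro enkf_rec_cong[where J = I\<^sub>1]) (auto simp: R\<^sub>1_def I\<^sub>1_def I\<^sub>2_def rvidx_set_def)
  have G_R\<^sub>1: "svar N (enkf_rec A B C D N n (rec \<omega>)) = G (R\<^sub>1 \<omega>)" for \<omega>
    unfolding G_def by (rule svar_cong) (simp add: particles_R\<^sub>1)
  have p_n: "p n \<omega> = G (R\<^sub>1 \<omega>)" if "\<omega> \<in> space M" for \<omega>
    unfolding p_def enkf_p_eq_svar_enkf_rec[OF X0 XS that] rec_def[symmetric] G_R\<^sub>1 ..
  have ratio: "phi A B C D (p n \<omega>) / p (Suc n) \<omega> = H (R\<^sub>1 \<omega>, R\<^sub>2 \<omega>)" if "\<omega> \<in> space M" for \<omega>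
  proof -
    have "p (Suc n) \<omega> = svar N (\<lambda>i. A * (1 - g (R\<^sub>1 \<omega>) * C) * enkf_rec A B C D N n (R\<^sub>1 \<omega>) i
        + (- A * g (R\<^sub>1 \<omega>) * D) * R\<^sub>2 \<omega> (IVp n i) + B * R\<^sub>2 \<omega> (IWp (Suc n) i))"
      unfolding p_def enkf_p_eq_svar_enkf_rec[OF X0 XS that] svar_enkf_rec_Suc rec_def[symmetric]
        g_def G_R\<^sub>1
      by (rule svar_cong) (simp add: particles_R\<^sub>1 R\<^sub>2_def I\<^sub>2_def)
    then show ?thesis
      by (simp add: H_def p_n[OF that])
  qed
  note [measurable] = indep_var_rv1[OF indep_R] indep_var_rv2[OF indep_R]
  have G_measurable[measurable]: "G \<in> borel_measurable (PiM I\<^sub>1 (\<lambda>_. borel))"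
    unfolding G_def by measurable
  have H_measurable[measurable]: "H \<in> borel_measurable (PiM I\<^sub>1 (\<lambda>_. borel) \<Otimes>\<^sub>M PiM I\<^sub>2 (\<lambda>_. borel))"
    unfolding H_def g_def G_def enkf_gain_def phi_def Let_def by measurable
  have inner: "ennreal 1 \<le> (\<integral>\<^sup>+\<omega>. ennreal (H (r, R\<^sub>2 \<omega>)) \<partial>M)
      \<and> (\<integral>\<^sup>+\<omega>. ennreal (H (r, R\<^sub>2 \<omega>)) \<partial>M) \<le> ennreal (1 + 12 / real N)" for r
  proof -
    define \<epsilon> where "\<epsilon> i \<omega> = (- A * g r * D) * Vp n i \<omega> + B * Wp (Suc n) i \<omega>" for i \<omega>
    have "H (r, R\<^sub>2 \<omega>) = phi A B C D (G r) / svar N (\<lambda>i. A * (1 - g r * C) * enkf_rec A B C D N n r i + \<epsilon> i \<omega>)"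
      for \<omega>
      unfolding H_def fst_conv snd_conv by (intro arg_cong2[where f = "(/)"] refl svar_cong)
        (simp add: \<epsilon>_def R\<^sub>2_def I\<^sub>2_def rec_def rvfam_def algebra_simps)
    moreover have "indep_vars (\<lambda>_. borel) \<epsilon> ?S"
      unfolding \<epsilon>_def by (rule enkf_step_noise(1)[OF indep Vp Wp B])
    moreover have "distributed M lborel (\<epsilon> i) (\<lambda>x. ennreal (normal_density 0 (sqrt ((A * g r * D)^2 + B^2)) x))"
      if "i \<in> ?S" for i
      unfolding \<epsilon>_def using enkf_step_noise(2)[OF indep Vp Wp B that, where a = "- A * g r * D" and n = n]
      by simp
    moreover have "6 \<le> N" using N by presburger
    ultimately show ?thesis
      using nn_integral_phi_div_svar_enkf_step[OF B D N(1), where x = "enkf_rec A B C D N n r" and \<epsilon> = \<epsilon> and C = C and A = A]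
      by (simp add: G_def g_def)
  qed
  have H: "0 \<le> H z" for z
    unfolding H_def G_def by (intro divide_nonneg_nonneg less_imp_le[OF phi_pos[OF B D]] svar_nonneg)
  show ?thesis
    by (rule real_cond_exp_bounds_of_indep[OF indep_R G_measurable H_measurable H _ _ inner p_n ratio]) simp_all
qed

theorem mainTheorem15:
  fixes A B C D :: real
  assumes "A \<noteq> 0" and "B \<noteq> 0" and "C \<noteq> 0" and "D \<noteq> 0"
  shows "\<exists>\<iota>::real. \<forall>(M::'a measure) X X0 V W xi0 Vp Wp (N::nat) (n::nat) x0hat P0.
    prob_space M
    \<and> P0 > 0
    \<and> even N \<and> N > 4
    \<and> prob_space.indep_vars M (\<lambda>_. borel) (rvfam X0 V W xi0 Vp Wp) (rvidx_set N)
    \<and> distributed M lborel X0 (\<lambda>x. ennreal (normal_density x0hat (sqrt P0) x))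
    \<and> (\<forall>k. distributed M lborel (V k) (\<lambda>x. ennreal (normal_density 0 1 x)))
    \<and> (\<forall>k. distributed M lborel (W k) (\<lambda>x. ennreal (normal_density 0 1 x)))
    \<and> (\<forall>i\<in>{1..N+1}. distributed M lborel (xi0 i) (\<lambda>x. ennreal (normal_density x0hat (sqrt P0) x)))
    \<and> (\<forall>k. \<forall>i\<in>{1..N+1}. distributed M lborel (Vp k i) (\<lambda>x. ennreal (normal_density 0 1 x)))
    \<and> (\<forall>k. \<forall>i\<in>{1..N+1}. distributed M lborel (Wp k i) (\<lambda>x. ennreal (normal_density 0 1 x)))
    \<and> (\<forall>\<omega>\<in>space M. X 0 \<omega> = X0 \<omega>)
    \<and> (\<forall>k. \<forall>\<omega>\<in>space M. X (Suc k) \<omega> = A * X k \<omega> + B * W (Suc k) \<omega>)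
    \<longrightarrow>
    (let p = (\<lambda>k \<omega>. enkf_p A B C D N (\<lambda>i. xi0 i \<omega>) (\<lambda>j. C * X j \<omega> + D * V j \<omega>)
                     (\<lambda>j i. Vp j i \<omega>) (\<lambda>j i. Wp j i \<omega>) k)
     in AE \<omega> in M.
          1 \<le> real_cond_exp M (vimage_algebra (space M) (p n) borel)
                 (\<lambda>\<omega>. phi A B C D (p n \<omega>) / p (Suc n) \<omega>) \<omega>
        \<and> real_cond_exp M (vimage_algebra (space M) (p n) borel)
                 (\<lambda>\<omega>. phi A B C D (p n \<omega>) / p (Suc n) \<omega>) \<omega> \<le> 1 + \<iota> / real N)"
  unfolding Let_def
  by (intro exI[of _ 12] allI impI, elim conjE, rule enkf_cond_exp_phi_div_bounds[OF assms(2,4)])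
    assumption+

end
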